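(* Let $d,n\in\mathbb{N}$, $W\in M_n(\mathbb{Z}_d)$, $\Omega=W-W^T$, $R$ a commutative ring, $\omega\in R$ such that $m\mapsto\omega^m$ is an embedding $\zeta:\mathbb{Z}_d\to R^\times$, $A\le R^\times$ a subgroup with $\omega\in A$, $M$ an associative $R$-algebra, and $\tau:\mathbb{Z}_d^n\to M$ such that $\mu:\mathcal{G}_d^n(A,\zeta,W)\to M$, $\mu(a,p,x)=a\,\omega^p\tau(x)$, is an injective multiplicative homomorphism. Then for all $(a,p,x),(b,q,y)\in\mathcal{G}_d^n(A,\zeta,W)$, $$\mu(a,p,x)\mu(b,q,y)\mu(a,p,x)^{-1}\mu(b,q,y)^{-1}=\omega^{x^T\Omega y},$$ and $$\mu(a,p,x)\mu(b,q,y)-\mu(b,q,y)\mu(a,p,x)=\big(1-\omega^{-x^T\Omega y}\big)\mu(a,p,x)\mu(b,q,y).$$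
   Context: $R^\times$ is the group of units of $R$. Let $F\subseteq A$ be a fixed set of representatives of $A/\zeta(\mathbb{Z}_d)$ with $1\in F$, and $r:A\to F$, $u:A\to\mathbb{Z}_d$ the maps with $a=r(a)\omega^{u(a)}$. The polar commutator group $\mathcal{G}_d^n(A,\zeta,W)$ is the set $F\times\mathbb{Z}_d\times\mathbb{Z}_d^n$ with multiplication $(a,p,x)\cdot(b,q,y)=(r(ab),\,u(ab)+p+q+x^TWy,\,x+y)$. *)

theory Defs
  imports Main
begin

text \<open>Elements of Z_d (d >= 1) are represented by integers in {0..<d};
  vectors in Z_d^n by functions nat => int with entries in {0..<d} at indices i < n
  and 0 elsewhere; matrices in M_n(Z_d) by functions nat => nat => int (only the
  entries with i,j < n matter).  The R-algebra M is a type of class ring_1 with a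
  scalar multiplication smult satisfying the algebra axioms.\<close>

definition zd :: "nat \<Rightarrow> int set" where
  "zd d = {0..<int d}"

definition zdvec :: "nat \<Rightarrow> nat \<Rightarrow> (nat \<Rightarrow> int) set" where
  "zdvec d n = {x. (\<forall>i<n. x i \<in> zd d) \<and> (\<forall>i\<ge>n. x i = 0)}"

definition zdmat :: "nat \<Rightarrow> nat \<Rightarrow> (nat \<Rightarrow> nat \<Rightarrow> int) \<Rightarrow> bool" where
  "zdmat d n W \<longleftrightarrow> (\<forall>i<n. \<forall>j<n. W i j \<in> zd d)"

definition bilin :: "nat \<Rightarrow> nat \<Rightarrow> (nat \<Rightarrow> nat \<Rightarrow> int) \<Rightarrow> (nat \<Rightarrow> int) \<Rightarrow> (nat \<Rightarrow> int) \<Rightarrow> int" where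
  "bilin d n W x y = (\<Sum>i<n. \<Sum>j<n. x i * W i j * y j) mod int d"

definition Omega :: "nat \<Rightarrow> (nat \<Rightarrow> nat \<Rightarrow> int) \<Rightarrow> nat \<Rightarrow> nat \<Rightarrow> int" where
  "Omega d W i j = (W i j - W j i) mod int d"

text \<open>omega^m for m in Z_d (well defined since omega^d = 1).\<close>
definition zpow :: "'r::comm_ring_1 \<Rightarrow> nat \<Rightarrow> int \<Rightarrow> 'r" where
  "zpow \<omega> d m = \<omega> ^ nat (m mod int d)"

definition vadd :: "nat \<Rightarrow> nat \<Rightarrow> (nat \<Rightarrow> int) \<Rightarrow> (nat \<Rightarrow> int) \<Rightarrow> (nat \<Rightarrow> int)" where
  "vadd d n x y = (\<lambda>i. if i < n then (x i + y i) mod int d else 0)"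

definition unit_subgroup :: "'r::comm_ring_1 set \<Rightarrow> bool" where
  "unit_subgroup A \<longleftrightarrow> 1 \<in> A \<and> (\<forall>a\<in>A. \<forall>b\<in>A. a * b \<in> A)
     \<and> (\<forall>a\<in>A. \<exists>b\<in>A. a * b = 1)"

definition pcg_carrier :: "'r set \<Rightarrow> nat \<Rightarrow> nat \<Rightarrow> ('r \<times> int \<times> (nat \<Rightarrow> int)) set" where
  "pcg_carrier F d n = F \<times> zd d \<times> zdvec d n"

definition pcg_mult ::
  "nat \<Rightarrow> nat \<Rightarrow> (nat \<Rightarrow> nat \<Rightarrow> int) \<Rightarrow> ('r::comm_ring_1 \<Rightarrow> 'r) \<Rightarrow> ('r \<Rightarrow> int)
   \<Rightarrow> 'r \<times> int \<times> (nat \<Rightarrow> int) \<Rightarrow> 'r \<times> int \<times> (nat \<Rightarrow> int) \<Rightarrow> 'r \<times> int \<times> (nat \<Rightarrow> int)" where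
  "pcg_mult d n W r u g h =
     (case g of (a, p, x) \<Rightarrow> case h of (b, q, y) \<Rightarrow>
        (r (a * b), (u (a * b) + p + q + bilin d n W x y) mod int d, vadd d n x y))"

definition is_algebra :: "('r::comm_ring_1 \<Rightarrow> 'm::ring_1 \<Rightarrow> 'm) \<Rightarrow> bool" where
  "is_algebra smult \<longleftrightarrow>
     (\<forall>a x y. smult a (x + y) = smult a x + smult a y) \<and>
     (\<forall>a b x. smult (a + b) x = smult a x + smult b x) \<and>
     (\<forall>a b x. smult (a * b) x = smult a (smult b x)) \<and>
     (\<forall>x. smult 1 x = x) \<and>
     (\<forall>a x y. smult a (x * y) = smult a x * y) \<and>
     (\<forall>a x y. smult a (x * y) = x * smult a y)"

definition is_inv :: "'m::ring_1 \<Rightarrow> 'm \<Rightarrow> bool" where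
  "is_inv m v \<longleftrightarrow> m * v = 1 \<and> v * m = 1"

definition minv :: "'m::ring_1 \<Rightarrow> 'm" where
  "minv m = (THE v. is_inv m v)"

end

theory Submission
  imports Defs "HOL-Number_Theory.Cong"
begin

text \<open>The elements \<mu>(1,0,x) = \<tau>(x) multiply like the generators of the polar commutator
  group: \<tau>(x) \<tau>(y) = \<omega>^(x^T W y) \<tau>(x+y).  Swapping the factors changes the scalar by
  \<omega>^(x^T W y - y^T W x) = \<omega>^(x^T \<Omega> y), and the scalars a \<omega>^p are central, so
  \<mu>(g) \<mu>(h) = \<omega>^(x^T \<Omega> y) \<mu>(h) \<mu>(g).  Both commutator identities follow at once, the
  inverse of \<mu>(a,p,x) being \<mu>(a^-1, -p - x^T W (-x), -x).  Injectivity of \<zeta> and \<mu>, uniqueness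
  of the representatives in F and the range of the entries of W play no role.\<close>

lemma power_mod_order:
  fixes w :: "'a::monoid_mult"
  assumes "w ^ d = 1"
  shows "w ^ a = w ^ (a mod d)"
proof -
  have "w ^ a = (w ^ d) ^ (a div d) * w ^ (a mod d)"
    by (metis div_mult_mod_eq mult.commute power_add power_mult)
  then show ?thesis using assms by simp
qed

lemma zpow_0 [simp]: "zpow w d 0 = 1"
  by (simp add: zpow_def)

lemma zpow_mod [simp]: "zpow w d (m mod int d) = zpow w d m"
  by (simp add: zpow_def)

lemma zpow_cong: "[m = k] (mod int d) \<Longrightarrow> zpow w d m = zpow w d k"
  by (metis cong_def zpow_mod)

lemma zpow_add:
  fixes w :: "'r::comm_ring_1"
  assumes "w ^ d = 1" "d \<ge> 1"
  shows "zpow w d (m + k) = zpow w d m * zpow w d k"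
proof -
  let ?a = "nat (m mod int d)" and ?b = "nat (k mod int d)"
  have "int ((?a + ?b) mod d) = (m mod int d + k mod int d) mod int d"
    using assms(2) by (simp add: zmod_int)
  also have "\<dots> = (m + k) mod int d"
    by (simp add: mod_add_eq)
  finally have sum_mod: "(?a + ?b) mod d = nat ((m + k) mod int d)"
    by linarith
  have "zpow w d m * zpow w d k = w ^ (?a + ?b)"
    by (simp add: zpow_def power_add)
  also have "\<dots> = w ^ ((?a + ?b) mod d)"
    using power_mod_order[OF assms(1)] by blast
  finally show ?thesis
    by (simp add: zpow_def sum_mod)
qed

lemma zpow_uminus_mult:
  fixes w :: "'r::comm_ring_1"
  assumes "w ^ d = 1" "d \<ge> 1"
  shows "zpow w d (- m) * zpow w d m = 1"
  using zpow_add[OF assms, of "- m" m] by simp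

definition vneg :: "nat \<Rightarrow> nat \<Rightarrow> (nat \<Rightarrow> int) \<Rightarrow> nat \<Rightarrow> int" where
  "vneg d n x = (\<lambda>i. if i < n then (- x i) mod int d else 0)"

lemma vneg_in_zdvec: "d \<ge> 1 \<Longrightarrow> vneg d n x \<in> zdvec d n"
  by (auto simp: vneg_def zdvec_def zd_def)

lemma vadd_vneg: "vadd d n x (vneg d n x) = (\<lambda>_. 0)"
  by (rule ext) (simp add: vadd_def vneg_def mod_add_right_eq)

lemma vneg_vadd: "vadd d n (vneg d n x) x = (\<lambda>_. 0)"
  by (rule ext) (simp add: vadd_def vneg_def mod_add_left_eq)

lemma vadd_commute: "vadd d n x y = vadd d n y x"
  unfolding vadd_def by (metis add.commute)

lemma bilin_Omega_cong:
  "[bilin d n (Omega d W) x y + bilin d n W y x = bilin d n W x y] (mod int d)"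
proof -
  define S where "S W' = (\<Sum>i<n. \<Sum>j<n. x i * W' i j * y j)" for W' :: "nat \<Rightarrow> nat \<Rightarrow> int"
  define S' where "S' = (\<Sum>i<n. \<Sum>j<n. y i * W i j * x j)"
  have "[S (Omega d W) = S (\<lambda>i j. W i j - W j i)] (mod int d)"
    unfolding S_def by (intro cong_sum cong_mult cong_refl) (simp add: Omega_def cong_def)
  moreover have "S (\<lambda>i j. W i j - W j i) + S' = S W"
  proof -
    have "S' = (\<Sum>i<n. \<Sum>j<n. x i * W j i * y j)"
      unfolding S'_def by (subst sum.swap) (simp add: mult_ac)
    then show ?thesis
      unfolding S_def by (simp add: sum_subtractf algebra_simps)
  qed
  ultimately have "[S (Omega d W) + S' = S W] (mod int d)"
    by (metis cong_add cong_refl)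
  then show ?thesis
    unfolding bilin_def S_def S'_def by (simp add: cong_def mod_add_eq)
qed

lemma minv_eqI:
  fixes m :: "'m::ring_1"
  assumes "is_inv m v"
  shows "minv m = v"
  unfolding minv_def
proof (rule the_equality)
  fix w assume "is_inv m w"
  then have "w = w * (m * v)" "v = (w * m) * v"
    using assms by (auto simp: is_inv_def)
  then show "w = v" by (simp add: mult.assoc)
qed (fact assms)

locale algebra_smult =
  fixes smult :: "'r::comm_ring_1 \<Rightarrow> 'm::ring_1 \<Rightarrow> 'm"
  assumes is_algebra: "is_algebra smult"
begin

lemma smult_smult: "smult a (smult b x) = smult (a * b) x"
  and smult_one [simp]: "smult 1 x = x"
  and smult_mult_left: "smult a x * y = smult a (x * y)"
  and mult_smult_right: "x * smult a y = smult a (x * y)"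
  and smult_add_left: "smult (a + b) x = smult a x + smult b x"
  using is_algebra unfolding is_algebra_def by metis+

lemma smult_diff_left: "smult (a - b) x = smult a x - smult b x"
  by (metis smult_add_left diff_add_cancel add_diff_cancel)

lemma group_commutator_eq_smult:
  assumes "is_inv g v" "is_inv h w" "g * h = smult c (h * g)"
  shows "g * h * minv g * minv h = smult c 1"
proof -
  have "g * h * v * w = smult c (h * (g * v) * w)"
    by (simp add: assms(3) smult_mult_left mult.assoc)
  also have "\<dots> = smult c 1"
    using assms(1,2) by (simp add: is_inv_def)
  finally show ?thesis
    using minv_eqI[OF assms(1)] minv_eqI[OF assms(2)] by simp
qed

end

locale pcg_representation = algebra_smult smult
  for smult :: "'r::comm_ring_1 \<Rightarrow> 'm::ring_1 \<Rightarrow> 'm" +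
  fixes d n :: nat
    and W :: "nat \<Rightarrow> nat \<Rightarrow> int"
    and \<omega> :: "'r"
    and A F :: "'r set"
    and r :: "'r \<Rightarrow> 'r" and u :: "'r \<Rightarrow> int"
    and \<tau> :: "(nat \<Rightarrow> int) \<Rightarrow> 'm"
    and \<mu> :: "'r \<times> int \<times> (nat \<Rightarrow> int) \<Rightarrow> 'm"
  assumes d_pos: "d \<ge> 1"
    and omega_ord: "\<omega> ^ d = 1"
    and A: "unit_subgroup A"
    and F: "F \<subseteq> A" "1 \<in> F"
    and normal_form_one: "r 1 * zpow \<omega> d (u 1) = 1"
    and mu_def: "\<mu> (a, p, x) = smult (a * zpow \<omega> d p) (\<tau> x)"
    and mu_hom: "\<lbrakk>g \<in> pcg_carrier F d n; h \<in> pcg_carrier F d n\<rbrakk>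
                   \<Longrightarrow> \<mu> (pcg_mult d n W r u g h) = \<mu> g * \<mu> h"
    and mu_unit: "\<mu> (1, 0, (\<lambda>_. 0)) = 1"
begin

abbreviation \<zeta> :: "int \<Rightarrow> 'r" where
  "\<zeta> \<equiv> zpow \<omega> d"

lemma zeta_add: "\<zeta> (m + k) = \<zeta> m * \<zeta> k"
  using zpow_add[OF omega_ord d_pos] .

lemma mu_one_zero: "\<mu> (1, 0, x) = \<tau> x"
  by (simp add: mu_def)

lemma tau_zero: "\<tau> (\<lambda>_. 0) = 1"
  using mu_unit mu_one_zero by simp

lemma tau_mult:
  assumes "x \<in> zdvec d n" "y \<in> zdvec d n"
  shows "\<tau> x * \<tau> y = smult (\<zeta> (bilin d n W x y)) (\<tau> (vadd d n x y))"
proof -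
  have "(1, 0, x) \<in> pcg_carrier F d n" "(1, 0, y) \<in> pcg_carrier F d n"
    using assms F d_pos by (auto simp: pcg_carrier_def zd_def)
  then have "\<tau> x * \<tau> y = \<mu> (pcg_mult d n W r u (1, 0, x) (1, 0, y))"
    by (simp add: mu_hom mu_one_zero)
  also have "\<dots> = smult ((r 1 * \<zeta> (u 1)) * \<zeta> (bilin d n W x y)) (\<tau> (vadd d n x y))"
    by (simp add: pcg_mult_def mu_def zeta_add mult.assoc)
  finally show ?thesis
    by (simp add: normal_form_one)
qed

lemma mu_mult:
  assumes "x \<in> zdvec d n" "y \<in> zdvec d n"
  shows "\<mu> (a, p, x) * \<mu> (b, q, y)
           = smult (a * b * \<zeta> (p + q + bilin d n W x y)) (\<tau> (vadd d n x y))"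
proof -
  have "\<mu> (a, p, x) * \<mu> (b, q, y) = smult (a * \<zeta> p) (smult (b * \<zeta> q) (\<tau> x * \<tau> y))"
    by (simp add: mu_def smult_mult_left mult_smult_right smult_smult mult.commute)
  then show ?thesis
    by (simp add: tau_mult[OF assms] smult_smult zeta_add algebra_simps)
qed

lemma mu_invertible:
  assumes "a \<in> A" "x \<in> zdvec d n"
  shows "\<exists>v. is_inv (\<mu> (a, p, x)) v"
proof -
  obtain a' where a': "a * a' = 1"
    using A assms(1) by (auto simp: unit_subgroup_def)
  let ?x' = "vneg d n x"
  have x': "?x' \<in> zdvec d n"
    using d_pos by (rule vneg_in_zdvec)
  define v where "v = \<mu> (a', - p - bilin d n W x ?x', ?x')"
  define v' where "v' = \<mu> (a', - p - bilin d n W ?x' x, ?x')"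
  have right_inv: "\<mu> (a, p, x) * v = 1"
    unfolding v_def mu_mult[OF assms(2) x'] vadd_vneg using a' by (simp add: tau_zero)
  have left_inv: "v' * \<mu> (a, p, x) = 1"
    unfolding v'_def mu_mult[OF x' assms(2)] vneg_vadd using a' by (simp add: tau_zero mult.commute)
  have "v' = v"
    by (metis right_inv left_inv mult.assoc mult_1_left mult_1_right)
  then show ?thesis
    using right_inv left_inv unfolding is_inv_def by blast
qed

lemma mu_commute:
  assumes "x \<in> zdvec d n" "y \<in> zdvec d n"
  shows "\<mu> (a, p, x) * \<mu> (b, q, y)
           = smult (\<zeta> (bilin d n (Omega d W) x y)) (\<mu> (b, q, y) * \<mu> (a, p, x))"
proof -
  have "\<zeta> (bilin d n W x y) = \<zeta> (bilin d n (Omega d W) x y) * \<zeta> (bilin d n W y x)"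
    using zpow_cong[OF bilin_Omega_cong, of \<omega> d n W x y] by (simp add: zeta_add)
  then show ?thesis
    by (simp add: mu_mult assms smult_smult zeta_add vadd_commute[of d n y] algebra_simps)
qed

lemma mu_group_commutator:
  assumes "a \<in> A" "b \<in> A" "x \<in> zdvec d n" "y \<in> zdvec d n"
  shows "\<mu> (a, p, x) * \<mu> (b, q, y) * minv (\<mu> (a, p, x)) * minv (\<mu> (b, q, y))
           = smult (\<zeta> (bilin d n (Omega d W) x y)) 1"
  using mu_invertible[OF assms(1,3)] mu_invertible[OF assms(2,4)]
    group_commutator_eq_smult mu_commute[OF assms(3,4)] by blast

lemma mu_ring_commutator:
  assumes "x \<in> zdvec d n" "y \<in> zdvec d n"
  shows "\<mu> (a, p, x) * \<mu> (b, q, y) - \<mu> (b, q, y) * \<mu> (a, p, x)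
           = smult (1 - \<zeta> (- bilin d n (Omega d W) x y)) (\<mu> (a, p, x) * \<mu> (b, q, y))"
proof -
  have "\<mu> (b, q, y) * \<mu> (a, p, x)
          = smult (\<zeta> (- bilin d n (Omega d W) x y)) (\<mu> (a, p, x) * \<mu> (b, q, y))"
    using zpow_uminus_mult[OF omega_ord d_pos]
    by (simp add: mu_commute[OF assms] smult_smult)
  then show ?thesis
    by (simp add: smult_diff_left)
qed

end

theorem proposition24:
  fixes d n :: nat
    and W :: "nat \<Rightarrow> nat \<Rightarrow> int"
    and \<omega> :: "'r::comm_ring_1"
    and A F :: "'r set"
    and r :: "'r \<Rightarrow> 'r" and u :: "'r \<Rightarrow> int"
    and smult :: "'r \<Rightarrow> 'm::ring_1 \<Rightarrow> 'm"
    and \<tau> :: "(nat \<Rightarrow> int) \<Rightarrow> 'm"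
    and \<mu> :: "'r \<times> int \<times> (nat \<Rightarrow> int) \<Rightarrow> 'm"
  assumes d_pos: "d \<ge> 1"
    and W: "zdmat d n W"
    and omega_ord: "\<omega> ^ d = 1"
    and omega_inj: "inj_on (\<lambda>m. \<omega> ^ m) {..<d}"
    and A: "unit_subgroup A" and omega_A: "\<omega> \<in> A"
    and F: "F \<subseteq> A" "1 \<in> F"
    and F_repr: "\<forall>a\<in>A. \<exists>!f. f \<in> F \<and> (\<exists>m<d. a = f * \<omega> ^ m)"
    and ru: "\<forall>a\<in>A. r a \<in> F \<and> u a \<in> zd d \<and> a = r a * zpow \<omega> d (u a)"
    and alg: "is_algebra smult"
    and mu_def: "\<And>a p x. \<mu> (a, p, x) = smult (a * zpow \<omega> d p) (\<tau> x)"
    and mu_hom: "\<forall>g\<in>pcg_carrier F d n. \<forall>h\<in>pcg_carrier F d n.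
                    \<mu> (pcg_mult d n W r u g h) = \<mu> g * \<mu> h"
    and mu_unit: "\<mu> (1, 0, (\<lambda>_. 0)) = 1"
    and mu_inj: "inj_on \<mu> (pcg_carrier F d n)"
  shows "\<forall>a p x b q y. (a, p, x) \<in> pcg_carrier F d n \<longrightarrow> (b, q, y) \<in> pcg_carrier F d n \<longrightarrow>
           (\<exists>v. is_inv (\<mu> (a, p, x)) v) \<and> (\<exists>w. is_inv (\<mu> (b, q, y)) w) \<and>
           \<mu> (a, p, x) * \<mu> (b, q, y) * minv (\<mu> (a, p, x)) * minv (\<mu> (b, q, y))
             = smult (zpow \<omega> d (bilin d n (Omega d W) x y)) 1 \<and>
           \<mu> (a, p, x) * \<mu> (b, q, y) - \<mu> (b, q, y) * \<mu> (a, p, x)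
             = smult (1 - zpow \<omega> d (- bilin d n (Omega d W) x y)) (\<mu> (a, p, x) * \<mu> (b, q, y))"
proof -
  have "1 \<in> A" using A by (simp add: unit_subgroup_def)
  then interpret pcg_representation smult d n W \<omega> A F r u \<tau> \<mu>
    using d_pos omega_ord A F ru alg mu_def mu_hom mu_unit
    by unfold_locales auto
  show ?thesis
    unfolding pcg_carrier_def
    using F mu_invertible mu_group_commutator mu_ring_commutator by blast
qed

end
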